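(* Under the standing setup, there exists a polynomial $p_3(x)$ such that for all sufficiently large $n$, $$\mu\otimes\mu(Q_{n,k})\le p_3(n)\,e^{-2n(h(\mu)-\delta)}\gamma^n.$$
   Context: Standing setup. $\mathcal{A}$ is a finite alphabet, $X\subset\mathcal{A}^{\mathbb{Z}}$ a non-trivial topologically mixing SFT with left shift $\sigma$, $f:X\to\mathbb{R}$ H\"older continuous with pressure $P=P_X(f)$, and $\mu$ the Gibbs measure (unique equilibrium state) of $f$, with entropy $h(\mu)$. $B_m(X)$ is the set of words of length $m$ in $X$; $[w]=\{x\in X:x_0\dots x_{|w|-1}=w\}$, $\mu(w)=\mu([w])$, and $\mu\otimes\mu(S)=\sum_{(u,v)\in S}\mu(u)\mu(v)$. Words are written $u=u_1\dots u_k$, $u_i^j=u_i\dots u_j$. $K>1$ is a constant such that: (i) for all $m\ge1$, $x\in X$: $K^{-1}\le\mu(x_0\dots x_{m-1})/\exp(-Pm+\sum_{i=0}^{m-1}f(\sigma^ix))\le K$; (ii) $\mu(uv)\le K\mu(u)\mu(v)$ and $\mu(\sigma^{-|u|}[v]\mid[u])\le K\mu(v)$ whenever $uv\in B(X)$. $\gamma_0=\inf\{\gamma>0:\exists n_0\ \forall m\ge n_0\ \forall u\in B_m(X),\ \mu(u)\le\gamma^m\}$. Parameters: $\alpha\in(\gamma_0,1]$; $\gamma\in(\gamma_0,\alpha)$; $n_0$ such that $\mu(u)\le\gamma^{|u|}$ for all $u\in B(X)$ with $|u|\ge n_0$; $n\ge n_0$; $0<\delta<\frac14\log(\alpha/\gamma)$;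 $k=k(n)$ with $n/k\to0$ and $k=o(n^2/\log n)$; $\ell=k-n+1$. For a word $u$ of length $\ge n$, $W_n(u)$ is the set of distinct subwords of $u$ of length $n$. $E_n=\{u\in B_n(X):|-\frac1n\log\mu(u)-h(\mu)|<\delta\}$, $G_{n,k}=\{u\in B_k(X): u_1^n=u_\ell^k\text{ and }u_1^n\in E_n\}$, and $Q_{n,k}=\{(u,v)\in G_{n,k}\times G_{n,k}: W_n(u)\cap W_n(v)\neq\emptyset\}$. *)

theory Defs
  imports "HOL-Probability.Probability" "HOL-Library.Landau_Symbols"
          "HOL-Computational_Algebra.Polynomial"
begin

text \<open>Configurations of the full shift over a finite alphabet: functions int => 'a.
Words are lists; the word u = u_1 ... u_k is the list [u!0, ..., u!(k-1)].\<close>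

definition cyl :: "'a list \<Rightarrow> (int \<Rightarrow> 'a) set" where
  "cyl w = {x. \<forall>j<length w. x (int j) = w ! j}"

definition shift :: "(int \<Rightarrow> 'a) \<Rightarrow> (int \<Rightarrow> 'a)" where
  "shift x = (\<lambda>i. x (i + 1))"

definition lang :: "(int \<Rightarrow> 'a) set \<Rightarrow> 'a list set" where
  "lang X = {w. cyl w \<inter> X \<noteq> {}}"

definition words :: "(int \<Rightarrow> 'a) set \<Rightarrow> nat \<Rightarrow> 'a list set" where
  "words X m = {w. length w = m \<and> cyl w \<inter> X \<noteq> {}}"

definition init_word :: "(int \<Rightarrow> 'a) \<Rightarrow> nat \<Rightarrow> 'a list" where
  "init_word x m = map (\<lambda>j. x (int j)) [0..<m]"

definition is_SFT :: "(int \<Rightarrow> 'a) set \<Rightarrow> bool" where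
  "is_SFT X \<longleftrightarrow> (\<exists>F. finite F \<and>
      X = {x. \<forall>i. \<forall>w\<in>F. \<not> (\<forall>j<length w. x (i + int j) = w ! j)})"

definition top_mixing :: "(int \<Rightarrow> 'a) set \<Rightarrow> bool" where
  "top_mixing X \<longleftrightarrow> (\<forall>u\<in>lang X. \<forall>v\<in>lang X. \<exists>N. \<forall>m\<ge>N.
      \<exists>x\<in>X. x \<in> cyl u \<and> (shift ^^ m) x \<in> cyl v)"

text \<open>Hoelder continuity w.r.t. the metric d(x,y) = 2^(-min{|i| : x i \<noteq> y i}).\<close>
definition holder_on :: "(int \<Rightarrow> 'a) set \<Rightarrow> ((int \<Rightarrow> 'a) \<Rightarrow> real) \<Rightarrow> bool" where
  "holder_on X f \<longleftrightarrow> (\<exists>C \<theta>. 0 < \<theta> \<and> \<theta> < 1 \<and>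
      (\<forall>x\<in>X. \<forall>y\<in>X. \<forall>N::nat. (\<forall>i. \<bar>i\<bar> < int N \<longrightarrow> x i = y i) \<longrightarrow>
          \<bar>f x - f y\<bar> \<le> C * \<theta> ^ N))"

definition birkhoff :: "((int \<Rightarrow> 'a) \<Rightarrow> real) \<Rightarrow> nat \<Rightarrow> (int \<Rightarrow> 'a) \<Rightarrow> real" where
  "birkhoff f m x = (\<Sum>i<m. f ((shift ^^ i) x))"

definition pressure :: "(int \<Rightarrow> 'a) set \<Rightarrow> ((int \<Rightarrow> 'a) \<Rightarrow> real) \<Rightarrow> real" where
  "pressure X f = lim (\<lambda>m. ln (\<Sum>w\<in>words X m. exp (SUP x\<in>cyl w \<inter> X. birkhoff f m x)) / real m)"

text \<open>Borel sigma-algebra of A^Z (product of discrete spaces).\<close>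
definition shift_space :: "(int \<Rightarrow> 'a) measure" where
  "shift_space = PiM UNIV (\<lambda>_. count_space UNIV)"

definition wmeas :: "(int \<Rightarrow> 'a) measure \<Rightarrow> 'a list \<Rightarrow> real" where
  "wmeas \<nu> w = measure \<nu> (cyl w)"

text \<open>Kolmogorov-Sinai entropy, computed with the (generating) time-zero partition.\<close>
definition ms_entropy :: "(int \<Rightarrow> 'a) set \<Rightarrow> (int \<Rightarrow> 'a) measure \<Rightarrow> real" where
  "ms_entropy X \<nu> = lim (\<lambda>m. - (\<Sum>w\<in>words X m. wmeas \<nu> w * ln (wmeas \<nu> w)) / real m)"

definition invariant_on :: "(int \<Rightarrow> 'a) set \<Rightarrow> (int \<Rightarrow> 'a) measure \<Rightarrow> bool" where
  "invariant_on X \<nu> \<longleftrightarrow> prob_space \<nu> \<and> sets \<nu> = sets shift_space \<and>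
     shift \<in> measurable \<nu> \<nu> \<and>
     (\<forall>A\<in>sets \<nu>. measure \<nu> (shift -` A) = measure \<nu> A) \<and>
     (AE x in \<nu>. x \<in> X)"

definition equilibrium_state ::
  "(int \<Rightarrow> 'a) set \<Rightarrow> ((int \<Rightarrow> 'a) \<Rightarrow> real) \<Rightarrow> (int \<Rightarrow> 'a) measure \<Rightarrow> bool" where
  "equilibrium_state X f \<mu> \<longleftrightarrow> invariant_on X \<mu> \<and>
     (\<forall>\<nu>. invariant_on X \<nu> \<longrightarrow>
        ms_entropy X \<nu> + (\<integral>x. indicator X x * f x \<partial>\<nu>)
          \<le> ms_entropy X \<mu> + (\<integral>x. indicator X x * f x \<partial>\<mu>))"

definition gamma0 :: "(int \<Rightarrow> 'a) set \<Rightarrow> (int \<Rightarrow> 'a) measure \<Rightarrow> real" where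
  "gamma0 X \<mu> = Inf {g. g > 0 \<and> (\<exists>n0. \<forall>m\<ge>n0. \<forall>u\<in>words X m. wmeas \<mu> u \<le> g ^ m)}"

definition subwords :: "nat \<Rightarrow> 'a list \<Rightarrow> 'a list set" where
  "subwords n u = {take n (drop i u) | i. i + n \<le> length u}"

definition E_set :: "(int \<Rightarrow> 'a) set \<Rightarrow> (int \<Rightarrow> 'a) measure \<Rightarrow> real \<Rightarrow> nat \<Rightarrow> 'a list set" where
  "E_set X \<mu> \<delta> n = {u\<in>words X n.
      \<bar>- (1 / real n) * ln (wmeas \<mu> u) - ms_entropy X \<mu>\<bar> < \<delta>}"

text \<open>G_{n,k}: u_1^n = u_l^k with l = k - n + 1, i.e. take n u = drop (k - n) u.\<close>
definition G_set :: "(int \<Rightarrow> 'a) set \<Rightarrow> (int \<Rightarrow> 'a) measure \<Rightarrow> real \<Rightarrow> nat \<Rightarrow> nat \<Rightarrow> 'a list set" where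
  "G_set X \<mu> \<delta> n k = {u\<in>words X k. take n u = drop (k - n) u \<and> take n u \<in> E_set X \<mu> \<delta> n}"

definition Q_set :: "(int \<Rightarrow> 'a) set \<Rightarrow> (int \<Rightarrow> 'a) measure \<Rightarrow> real \<Rightarrow> nat \<Rightarrow> nat \<Rightarrow> ('a list \<times> 'a list) set" where
  "Q_set X \<mu> \<delta> n k = {(u, v). u \<in> G_set X \<mu> \<delta> n k \<and> v \<in> G_set X \<mu> \<delta> n k \<and>
      subwords n u \<inter> subwords n v \<noteq> {}}"

end

theory Submission
  imports Defs "HOL-Real_Asymp.Real_Asymp"
begin

text \<open>Write \<open>E = exp (- n (h(\<mu>) - \<delta>))\<close>. Every \<open>u \<in> G_set X \<mu> \<delta> n k\<close> begins and ends with the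
  same block \<open>b \<in> E_set X \<mu> \<delta> n\<close>, so \<open>\<mu>(b) \<le> E\<close>. Given a window \<open>s\<close> of length \<open>n\<close> in \<open>u\<close>,
  delete the copy of \<open>b\<close> disjoint from it: by the quasi-Bernoulli property \<open>\<mu>(u) \<le> K E \<mu>(u')\<close>,
  where \<open>u \<mapsto> u'\<close> is injective and \<open>u'\<close> still contains \<open>s\<close>. Splitting \<open>u'\<close> around \<open>s\<close> and
  using that the words of a fixed length have total measure at most \<open>1\<close>, the words of \<open>G_set\<close>
  with \<open>s\<close> at a given position have total measure at most \<open>K\<^sup>3 E \<mu>(s) \<le> K\<^sup>3 E \<gamma>\<^sup>n\<close>, while all
  of \<open>G_set\<close> has measure at most \<open>K E\<close>. Summing over the \<open>(k - n + 1)\<^sup>2\<close> pairs of window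
  positions gives \<open>\<mu>\<otimes>\<mu>(Q) \<le> K\<^sup>4 (k - n + 1)\<^sup>2 E\<^sup>2 \<gamma>\<^sup>n\<close>, and eventually \<open>k \<le> n\<^sup>2\<close>.
  Only the quasi-Bernoulli upper bound, the bound \<open>\<mu>(u) \<le> \<gamma>\<^bsup>|u|\<^esup>\<close> and the growth of \<open>k\<close>
  are used.\<close>

lemma cyl_sets: "cyl w \<in> sets shift_space"
proof -
  have "cyl w = {x \<in> space shift_space. \<forall>j\<in>{..<length w}. x (int j) = w ! j}"
    by (auto simp: cyl_def shift_space_def space_PiM)
  also have "\<dots> \<in> sets shift_space"
    unfolding shift_space_def by measurable
  finally show ?thesis .
qed

lemma wmeas_nonneg [simp]: "0 \<le> wmeas \<mu> w"
  by (simp add: wmeas_def)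

lemma finite_lists_length: "finite {xs :: 'a::finite list. length xs = m}"
  using finite_lists_length_eq[of "UNIV :: 'a set" m] by simp

lemma sum_wmeas_length_le_1:
  fixes \<mu> :: "(int \<Rightarrow> 'a::finite) measure"
  assumes "prob_space \<mu>" and "sets \<mu> = sets shift_space"
    and len: "\<And>w. w \<in> W \<Longrightarrow> length w = m"
  shows "(\<Sum>w\<in>W. wmeas \<mu> w) \<le> 1"
proof -
  interpret prob_space \<mu> by fact
  have "finite W"
    using len by (intro finite_subset[OF _ finite_lists_length[of m]]) auto
  moreover have "disjoint_family_on cyl W"
    unfolding disjoint_family_on_def
  proof (intro ballI impI)
    fix v w assume "v \<in> W" "w \<in> W" "v \<noteq> w"
    then obtain j where "j < m" "v ! j \<noteq> w ! j"
      using len by (metis nth_equalityI)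
    then show "cyl v \<inter> cyl w = {}"
      using len \<open>v \<in> W\<close> \<open>w \<in> W\<close> by (auto simp: cyl_def)
  qed
  ultimately have "(\<Sum>w\<in>W. wmeas \<mu> w) = measure \<mu> (\<Union>(cyl ` W))"
    unfolding wmeas_def using cyl_sets assms(2)
    by (intro measure_finite_Union[symmetric]) auto
  also have "\<dots> \<le> 1" by (rule prob_le_1)
  finally show ?thesis .
qed

lemma sum_UN_le:
  fixes f :: "'b \<Rightarrow> real"
  assumes "finite I" "\<And>i. i \<in> I \<Longrightarrow> finite (A i)" "\<And>x. 0 \<le> f x"
  shows "sum f (\<Union>i\<in>I. A i) \<le> (\<Sum>i\<in>I. sum f (A i))"
  using assms
proof (induction I rule: finite_induct)
  case (insert a I)
  have "sum f (\<Union>i\<in>insert a I. A i) \<le> sum f (A a) + sum f (\<Union>i\<in>I. A i)"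
    using insert by (simp add: sum_Un sum_nonneg)
  also have "\<dots> \<le> sum f (A a) + (\<Sum>i\<in>I. sum f (A i))"
    using insert by (simp add: add_left_mono)
  finally show ?case using insert by simp
qed simp

lemma funpow_shift_apply: "(shift ^^ m) x i = x (i + int m)"
  by (induction m arbitrary: i) (auto simp: shift_def algebra_simps)

lemma SFT_shift_closed: "is_SFT X \<Longrightarrow> x \<in> X \<Longrightarrow> shift x \<in> X"
  unfolding is_SFT_def shift_def
  by (auto simp: algebra_simps) (metis add.assoc)

lemma SFT_funpow_shift_closed: "is_SFT X \<Longrightarrow> x \<in> X \<Longrightarrow> (shift ^^ m) x \<in> X"
  by (induction m) (auto intro: SFT_shift_closed)

lemma lang_take: "u \<in> lang X \<Longrightarrow> take m u \<in> lang X"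
  unfolding lang_def cyl_def by auto

lemma lang_drop:
  assumes "is_SFT X" "u \<in> lang X"
  shows "drop m u \<in> lang X"
proof -
  from assms(2) obtain x where x: "x \<in> cyl u" "x \<in> X" unfolding lang_def by auto
  have "(shift ^^ m) x \<in> cyl (drop m u)"
    using x(1) unfolding cyl_def
    by (auto simp: funpow_shift_apply) (metis add.commute of_nat_add less_diff_conv)
  then show ?thesis
    using SFT_funpow_shift_closed[OF assms(1) x(2)] unfolding lang_def by auto
qed

lemma wmeas_E_set_le:
  assumes "w \<in> E_set X \<mu> \<delta> n" "1 \<le> n"
  shows "wmeas \<mu> w \<le> exp (- real n * (ms_entropy X \<mu> - \<delta>))"
proof (cases "wmeas \<mu> w = 0")
  case False
  then have pos: "0 < wmeas \<mu> w" using wmeas_nonneg[of \<mu> w] by linarith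
  from assms have "ms_entropy X \<mu> - \<delta> < - (1 / real n) * ln (wmeas \<mu> w)"
    by (simp add: E_set_def abs_less_iff)
  then have "ln (wmeas \<mu> w) < - real n * (ms_entropy X \<mu> - \<delta>)"
    using assms(2) by (simp add: field_simps)
  then have "exp (ln (wmeas \<mu> w)) < exp (- real n * (ms_entropy X \<mu> - \<delta>))"
    by simp
  then show ?thesis using pos by simp
qed simp

lemma G_setD:
  assumes "u \<in> G_set X \<mu> \<delta> n k"
  shows "length u = k" "u \<in> lang X" "take n u = drop (k - n) u" "take n u \<in> E_set X \<mu> \<delta> n"
  using assms by (auto simp: G_set_def words_def lang_def)

text \<open>For a window of length \<open>n\<close> at position \<open>i\<close>, \<open>cut_period\<close> deletes the copy of the
  repeated boundary block (of a word in \<open>G_set X \<mu> \<delta> n k\<close>) that is disjoint from the window, which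
  needs \<open>3 * n \<le> k\<close>; the window then sits at position \<open>cut_offset\<close> of the remaining word of
  length \<open>k - n\<close>.\<close>

definition cut_period :: "nat \<Rightarrow> nat \<Rightarrow> nat \<Rightarrow> 'a list \<Rightarrow> 'a list" where
  "cut_period n k i u = (if i + 2 * n \<le> k then take (k - n) u else drop n u)"

definition cut_offset :: "nat \<Rightarrow> nat \<Rightarrow> nat \<Rightarrow> nat" where
  "cut_offset n k i = (if i + 2 * n \<le> k then i else i - n)"

lemma length_cut_period: "length u = k \<Longrightarrow> length (cut_period n k i u) = k - n"
  by (simp add: cut_period_def)

lemma cut_offset_le:
  assumes "3 * n \<le> k" "i + n \<le> k"
  shows "cut_offset n k i + n \<le> k - n"
  using assms by (auto simp: cut_offset_def)

lemma cut_period_window: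
  assumes "3 * n \<le> k" "i + n \<le> k"
  shows "take n (drop (cut_offset n k i) (cut_period n k i u)) = take n (drop i u)"
proof (cases "i + 2 * n \<le> k")
  case True
  then show ?thesis by (simp add: cut_offset_def cut_period_def drop_take)
next
  case False
  then have "n \<le> i" using assms(1) by linarith
  with False show ?thesis by (simp add: cut_offset_def cut_period_def)
qed

lemma cut_period_in_lang: "is_SFT X \<Longrightarrow> u \<in> lang X \<Longrightarrow> cut_period n k i u \<in> lang X"
  by (simp add: cut_period_def lang_take lang_drop)

lemma G_set_split_cut_period:
  assumes "u \<in> G_set X \<mu> \<delta> n k"
  shows "u = (if i + 2 * n \<le> k then cut_period n k i u @ take n u
              else take n u @ cut_period n k i u)"
proof -
  have "u = take (k - n) u @ take n u"
    using G_setD(3)[OF assms] by simp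
  then show ?thesis by (simp add: cut_period_def)
qed

lemma inj_on_cut_period:
  assumes "2 * n \<le> k"
  shows "inj_on (cut_period n k i) (G_set X \<mu> \<delta> n k)"
proof (rule inj_onI)
  fix u v assume u: "u \<in> G_set X \<mu> \<delta> n k" and v: "v \<in> G_set X \<mu> \<delta> n k"
    and eq: "cut_period n k i u = cut_period n k i v"
  have block: "take n w = (if i + 2 * n \<le> k then take n (cut_period n k i w)
                           else drop (k - 2 * n) (cut_period n k i w))"
    if "w \<in> G_set X \<mu> \<delta> n k" for w
    using G_setD(3)[OF that] assms by (auto simp: cut_period_def min_def add.commute)
  show "u = v"
    using G_set_split_cut_period[OF u, of i] G_set_split_cut_period[OF v, of i]
      block[OF u] block[OF v] eq by metis
qed

lemma finite_G_set: "finite (G_set X (\<mu> :: (int \<Rightarrow> 'a::finite) measure) \<delta> n k)"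
  by (rule finite_subset[OF _ finite_lists_length[of k]]) (auto simp: G_set_def words_def)

lemma G_set_eq_empty: "k < n \<Longrightarrow> G_set X \<mu> \<delta> n k = {}"
  by (auto simp: G_set_def E_set_def words_def)

locale quasi_bernoulli =
  fixes X :: "(int \<Rightarrow> 'a::finite) set" and \<mu> :: "(int \<Rightarrow> 'a) measure" and K :: real
  assumes SFT: "is_SFT X"
    and prob: "prob_space \<mu>" and sets_eq: "sets \<mu> = sets shift_space"
    and K_nonneg: "0 \<le> K"
    and wmeas_append_le: "u @ v \<in> lang X \<Longrightarrow> wmeas \<mu> (u @ v) \<le> K * wmeas \<mu> u * wmeas \<mu> v"
begin

lemmas sum_wmeas_le_1 = sum_wmeas_length_le_1[OF prob sets_eq]

lemma wmeas_append3_le: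
  assumes "C @ s @ D \<in> lang X"
  shows "wmeas \<mu> (C @ s @ D) \<le> K\<^sup>2 * wmeas \<mu> C * wmeas \<mu> s * wmeas \<mu> D"
proof -
  have "s @ D \<in> lang X" using lang_drop[OF SFT assms, of "length C"] by simp
  have "wmeas \<mu> (C @ s @ D) \<le> K * wmeas \<mu> C * wmeas \<mu> (s @ D)"
    using wmeas_append_le assms by blast
  also have "\<dots> \<le> K * wmeas \<mu> C * (K * wmeas \<mu> s * wmeas \<mu> D)"
    using wmeas_append_le[OF \<open>s @ D \<in> lang X\<close>] K_nonneg by (intro mult_left_mono) auto
  finally show ?thesis by (simp add: power2_eq_square algebra_simps)
qed

lemma sum_wmeas_window_le:
  assumes W: "W \<subseteq> lang X" and len: "\<And>w. w \<in> W \<Longrightarrow> length w = m"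
    and window: "\<And>w. w \<in> W \<Longrightarrow> take (length s) (drop i w) = s"
    and i: "i + length s \<le> m"
  shows "(\<Sum>w\<in>W. wmeas \<mu> w) \<le> K\<^sup>2 * wmeas \<mu> s"
proof -
  define l where "l = length s"
  define outer where "outer w = (take i w, drop (i + l) w)" for w :: "'a list"
  have split: "w = take i w @ s @ drop (i + l) w" if "w \<in> W" for w
    using window[OF that] by (metis l_def append.assoc append_take_drop_id take_add)
  have "inj_on outer W"
    by (rule inj_onI) (metis split outer_def prod.inject)
  have finW: "finite W"
    using len by (intro finite_subset[OF _ finite_lists_length[of m]]) auto
  define g where "g p = wmeas \<mu> (fst p) * wmeas \<mu> (snd p)" for p :: "'a list \<times> 'a list"
  have "(\<Sum>p\<in>outer ` W. g p) \<le> (\<Sum>p\<in>(fst ` outer ` W) \<times> (snd ` outer ` W). g p)"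
    by (rule sum_mono2) (auto simp: finW g_def subset_fst_snd)
  also have "\<dots> = (\<Sum>a\<in>fst ` outer ` W. wmeas \<mu> a) * (\<Sum>b\<in>snd ` outer ` W. wmeas \<mu> b)"
    by (simp add: sum_product sum.cartesian_product g_def case_prod_beta')
  also have "\<dots> \<le> 1 * 1"
    using len i
    by (intro mult_mono sum_wmeas_le_1[of _ i] sum_wmeas_le_1[of _ "m - (i + l)"])
      (auto simp: outer_def l_def intro: sum_nonneg)
  finally have pairs: "(\<Sum>p\<in>outer ` W. g p) \<le> 1" by simp
  have "(\<Sum>w\<in>W. wmeas \<mu> w) \<le> (\<Sum>w\<in>W. K\<^sup>2 * wmeas \<mu> s * g (outer w))"
  proof (rule sum_mono)
    fix w assume "w \<in> W"
    then have "wmeas \<mu> w \<le> K\<^sup>2 * wmeas \<mu> (take i w) * wmeas \<mu> s * wmeas \<mu> (drop (i + l) w)"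
      using wmeas_append3_le split W by (metis subsetD)
    then show "wmeas \<mu> w \<le> K\<^sup>2 * wmeas \<mu> s * g (outer w)"
      by (simp add: g_def outer_def algebra_simps)
  qed
  also have "\<dots> = K\<^sup>2 * wmeas \<mu> s * (\<Sum>p\<in>outer ` W. g p)"
    by (simp add: sum_distrib_left sum.reindex[OF \<open>inj_on outer W\<close>])
  also have "\<dots> \<le> K\<^sup>2 * wmeas \<mu> s"
    using pairs K_nonneg by (simp add: mult_left_le)
  finally show ?thesis .
qed

lemma wmeas_G_set_le:
  assumes "u \<in> G_set X \<mu> \<delta> n k" "1 \<le> n"
  shows "wmeas \<mu> u \<le> K * exp (- real n * (ms_entropy X \<mu> - \<delta>)) * wmeas \<mu> (cut_period n k i u)"
proof -
  have "wmeas \<mu> u \<le> K * wmeas \<mu> (take n u) * wmeas \<mu> (cut_period n k i u)"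
    using G_set_split_cut_period[OF assms(1), of i] G_setD(2)[OF assms(1)]
      wmeas_append_le[of "cut_period n k i u" "take n u"]
      wmeas_append_le[of "take n u" "cut_period n k i u"]
    by (auto split: if_splits simp: algebra_simps)
  also have "\<dots> \<le> K * exp (- real n * (ms_entropy X \<mu> - \<delta>)) * wmeas \<mu> (cut_period n k i u)"
    using wmeas_E_set_le[OF G_setD(4)[OF assms(1)] assms(2)] K_nonneg
    by (intro mult_right_mono mult_left_mono) auto
  finally show ?thesis .
qed

lemma sum_G_set_le:
  assumes "2 * n \<le> k" "1 \<le> n"
  shows "(\<Sum>u\<in>G_set X \<mu> \<delta> n k. wmeas \<mu> u) \<le> K * exp (- real n * (ms_entropy X \<mu> - \<delta>))"
proof -
  define E where "E = exp (- real n * (ms_entropy X \<mu> - \<delta>))"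
  define G where "G = G_set X \<mu> \<delta> n k"
  have "(\<Sum>u\<in>G. wmeas \<mu> u) \<le> (\<Sum>u\<in>G. K * E * wmeas \<mu> (cut_period n k 0 u))"
    using wmeas_G_set_le assms(2) by (auto simp: G_def E_def intro: sum_mono)
  also have "\<dots> = K * E * (\<Sum>w\<in>cut_period n k 0 ` G. wmeas \<mu> w)"
    by (simp add: G_def sum_distrib_left sum.reindex[OF inj_on_cut_period[OF assms(1)]])
  also have "\<dots> \<le> K * E"
  proof -
    have "(\<Sum>w\<in>cut_period n k 0 ` G. wmeas \<mu> w) \<le> 1"
      by (rule sum_wmeas_le_1) (auto simp: G_def length_cut_period G_setD(1))
    then show ?thesis using K_nonneg by (simp add: E_def mult_left_le)
  qed
  finally show ?thesis by (simp add: G_def E_def)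
qed

lemma sum_G_set_window_le:
  assumes "3 * n \<le> k" "j + n \<le> k" "1 \<le> n"
  shows "(\<Sum>v\<in>{v \<in> G_set X \<mu> \<delta> n k. take n (drop j v) = s}. wmeas \<mu> v)
           \<le> K ^ 3 * exp (- real n * (ms_entropy X \<mu> - \<delta>)) * wmeas \<mu> s"
proof -
  define E where "E = exp (- real n * (ms_entropy X \<mu> - \<delta>))"
  define F where "F = {v \<in> G_set X \<mu> \<delta> n k. take n (drop j v) = s}"
  have "inj_on (cut_period n k j) F"
    by (rule inj_on_subset[OF inj_on_cut_period]) (use assms(1) in \<open>auto simp: F_def\<close>)
  have "(\<Sum>v\<in>F. wmeas \<mu> v) \<le> (\<Sum>v\<in>F. K * E * wmeas \<mu> (cut_period n k j v))"
    using wmeas_G_set_le assms(3) by (auto simp: F_def E_def intro: sum_mono)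
  also have "\<dots> = K * E * (\<Sum>w\<in>cut_period n k j ` F. wmeas \<mu> w)"
    using \<open>inj_on (cut_period n k j) F\<close> by (simp add: sum_distrib_left sum.reindex)
  also have "\<dots> \<le> K * E * (K\<^sup>2 * wmeas \<mu> s)"
  proof (cases "F = {}")
    case False
    then have "length s = n"
      using assms(2) by (auto simp: F_def dest: G_setD(1))
    have "take n (drop (cut_offset n k j) (cut_period n k j v)) = s" if "v \<in> F" for v
      using that cut_period_window[OF assms(1,2), of v] by (simp only: F_def mem_Collect_eq)
    then have "(\<Sum>w\<in>cut_period n k j ` F. wmeas \<mu> w) \<le> K\<^sup>2 * wmeas \<mu> s"
      using cut_offset_le[OF assms(1,2)] \<open>length s = n\<close>
      by (intro sum_wmeas_window_le[where m = "k - n" and i = "cut_offset n k j"])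
        (auto simp: F_def G_setD cut_period_in_lang[OF SFT] length_cut_period)
    then show ?thesis using K_nonneg by (simp add: E_def mult_left_mono)
  qed (use K_nonneg in \<open>simp add: E_def\<close>)
  finally show ?thesis by (simp add: F_def E_def power3_eq_cube power2_eq_square algebra_simps)
qed

lemma sum_overlapping_G_set_le:
  assumes "3 * n \<le> k" "1 \<le> n" "u \<in> G_set X \<mu> \<delta> n k"
    and window_le: "\<And>s. s \<in> lang X \<Longrightarrow> length s = n \<Longrightarrow> wmeas \<mu> s \<le> c"
  shows "(\<Sum>v\<in>{v \<in> G_set X \<mu> \<delta> n k. subwords n u \<inter> subwords n v \<noteq> {}}. wmeas \<mu> v)
           \<le> real (k - n + 1) ^ 2 * (K ^ 3 * exp (- real n * (ms_entropy X \<mu> - \<delta>)) * c)"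
proof -
  define E where "E = exp (- real n * (ms_entropy X \<mu> - \<delta>))"
  define G where "G = G_set X \<mu> \<delta> n k"
  define I where "I = {0..k - n} \<times> {0..k - n}"
  define A where "A p = {v \<in> G. take n (drop (snd p) v) = take n (drop (fst p) u)}" for p
  have "finite G" by (simp add: G_def finite_G_set)
  have "{v \<in> G. subwords n u \<inter> subwords n v \<noteq> {}} \<subseteq> (\<Union>p\<in>I. A p)"
  proof
    fix v assume "v \<in> {v \<in> G. subwords n u \<inter> subwords n v \<noteq> {}}"
    then obtain i j where "v \<in> G" "i + n \<le> length u" "j + n \<le> length v"
      and "take n (drop i u) = take n (drop j v)"
      by (auto simp: subwords_def)
    moreover have "length u = k" "length v = k"
      using assms(3) \<open>v \<in> G\<close> by (auto simp: G_def dest: G_setD(1))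
    ultimately have "(i, j) \<in> I" "v \<in> A (i, j)" by (auto simp: I_def A_def)
    then show "v \<in> (\<Union>p\<in>I. A p)" by blast
  qed
  then have "(\<Sum>v\<in>{v \<in> G. subwords n u \<inter> subwords n v \<noteq> {}}. wmeas \<mu> v)
             \<le> (\<Sum>v\<in>(\<Union>p\<in>I. A p). wmeas \<mu> v)"
    by (intro sum_mono2 finite_subset[OF _ \<open>finite G\<close>]) (auto simp: A_def)
  also have "\<dots> \<le> (\<Sum>p\<in>I. \<Sum>v\<in>A p. wmeas \<mu> v)"
    using \<open>finite G\<close> by (intro sum_UN_le) (auto simp: I_def A_def)
  also have "\<dots> \<le> (\<Sum>p\<in>I. K ^ 3 * E * c)"
  proof (rule sum_mono)
    fix p assume "p \<in> I"
    then have "fst p + n \<le> k" "snd p + n \<le> k" using assms(1) by (auto simp: I_def)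
    define s where "s = take n (drop (fst p) u)"
    have "s \<in> lang X"
      using G_setD(2)[OF assms(3)] by (simp add: s_def lang_take lang_drop[OF SFT])
    moreover have "length s = n"
      using G_setD(1)[OF assms(3)] \<open>fst p + n \<le> k\<close> by (simp add: s_def)
    ultimately have "K ^ 3 * E * wmeas \<mu> s \<le> K ^ 3 * E * c"
      using window_le K_nonneg by (simp add: E_def mult_left_mono)
    then show "(\<Sum>v\<in>A p. wmeas \<mu> v) \<le> K ^ 3 * E * c"
      using sum_G_set_window_le[OF assms(1) \<open>snd p + n \<le> k\<close> assms(2), of \<delta> s]
      by (simp add: A_def G_def E_def s_def)
  qed
  also have "\<dots> = real (k - n + 1) ^ 2 * (K ^ 3 * E * c)"
    by (simp add: I_def power2_eq_square) (simp add: algebra_simps)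
  finally show ?thesis by (simp add: G_def E_def)
qed

lemma sum_Q_set_le:
  assumes "3 * n \<le> k" "1 \<le> n" "0 \<le> c"
    and window_le: "\<And>s. s \<in> lang X \<Longrightarrow> length s = n \<Longrightarrow> wmeas \<mu> s \<le> c"
  shows "(\<Sum>(u, v)\<in>Q_set X \<mu> \<delta> n k. wmeas \<mu> u * wmeas \<mu> v)
           \<le> K ^ 4 * real (k - n + 1) ^ 2 * exp (- 2 * real n * (ms_entropy X \<mu> - \<delta>)) * c"
proof -
  define E where "E = exp (- real n * (ms_entropy X \<mu> - \<delta>))"
  define G where "G = G_set X \<mu> \<delta> n k"
  define V where "V u = {v \<in> G. subwords n u \<inter> subwords n v \<noteq> {}}" for u
  define B where "B = real (k - n + 1) ^ 2 * (K ^ 3 * E * c)"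
  have "0 \<le> B" using K_nonneg \<open>0 \<le> c\<close> by (simp add: B_def E_def)
  have "Q_set X \<mu> \<delta> n k = Sigma G V" by (auto simp: Q_set_def G_def V_def)
  then have "(\<Sum>(u, v)\<in>Q_set X \<mu> \<delta> n k. wmeas \<mu> u * wmeas \<mu> v)
             = (\<Sum>u\<in>G. \<Sum>v\<in>V u. wmeas \<mu> u * wmeas \<mu> v)"
    by (simp only:) (rule sum.Sigma[symmetric], auto simp: G_def V_def intro: finite_subset[OF _ finite_G_set])
  also have "\<dots> = (\<Sum>u\<in>G. wmeas \<mu> u * (\<Sum>v\<in>V u. wmeas \<mu> v))"
    by (simp add: sum_distrib_left)
  also have "\<dots> \<le> (\<Sum>u\<in>G. wmeas \<mu> u * B)"
    using sum_overlapping_G_set_le[OF assms(1,2) _ window_le]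
    by (intro sum_mono mult_left_mono) (auto simp: G_def V_def B_def E_def)
  also have "\<dots> = (\<Sum>u\<in>G. wmeas \<mu> u) * B"
    by (simp add: sum_distrib_right)
  also have "\<dots> \<le> K * E * B"
    using sum_G_set_le[of n k \<delta>] assms(1,2) \<open>0 \<le> B\<close>
    by (intro mult_right_mono) (auto simp: G_def E_def)
  also have "\<dots> = K ^ 4 * real (k - n + 1) ^ 2 * E ^ 2 * c"
    by (simp add: B_def power2_eq_square power3_eq_cube power4_eq_xxxx)
  also have "E ^ 2 = exp (- 2 * real n * (ms_entropy X \<mu> - \<delta>))"
    by (simp add: E_def exp_of_nat_mult[symmetric])
  finally show ?thesis .
qed

lemma sum_Q_set_le_square:
  assumes "3 * n \<le> k \<or> k = 0" "k \<le> n ^ 2" "1 \<le> n" "0 \<le> c"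
    and window_le: "\<And>s. s \<in> lang X \<Longrightarrow> length s = n \<Longrightarrow> wmeas \<mu> s \<le> c"
  shows "(\<Sum>(u, v)\<in>Q_set X \<mu> \<delta> n k. wmeas \<mu> u * wmeas \<mu> v)
           \<le> K ^ 4 * (real n ^ 2 + 1) ^ 2 * exp (- 2 * real n * (ms_entropy X \<mu> - \<delta>)) * c"
proof (cases "3 * n \<le> k")
  case True
  have "real (k - n + 1) ^ 2 \<le> (real n ^ 2 + 1) ^ 2"
    using assms(2) by (intro power_mono) (auto simp del: of_nat_power simp add: of_nat_power[symmetric])
  have "(\<Sum>(u, v)\<in>Q_set X \<mu> \<delta> n k. wmeas \<mu> u * wmeas \<mu> v)
      \<le> K ^ 4 * real (k - n + 1) ^ 2 * exp (- 2 * real n * (ms_entropy X \<mu> - \<delta>)) * c"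
    using sum_Q_set_le[OF True assms(3,4)] window_le by blast
  also have "\<dots> \<le> K ^ 4 * (real n ^ 2 + 1) ^ 2 * exp (- 2 * real n * (ms_entropy X \<mu> - \<delta>)) * c"
    using \<open>real (k - n + 1) ^ 2 \<le> (real n ^ 2 + 1) ^ 2\<close> K_nonneg \<open>0 \<le> c\<close>
    by (intro mult_right_mono mult_left_mono) auto
  finally show ?thesis .
next
  case False
  with assms(1,3) have "Q_set X \<mu> \<delta> n k = {}" by (simp add: Q_set_def G_set_eq_empty)
  then show ?thesis using K_nonneg \<open>0 \<le> c\<close> by simp
qed

end

lemma nonneg_of_wmeas_le_power:
  assumes "X \<noteq> {}" and le_power: "\<And>u. u \<in> lang X \<Longrightarrow> n0 \<le> length u \<Longrightarrow> wmeas \<mu> u \<le> \<gamma> ^ length u"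
  shows "0 \<le> (\<gamma> :: real)"
proof -
  obtain x where "x \<in> X" using assms(1) by blast
  define m where "m = 2 * n0 + 1"
  define w where "w = init_word x m"
  have "x \<in> cyl w" by (simp add: w_def init_word_def cyl_def)
  with \<open>x \<in> X\<close> have "w \<in> lang X" by (auto simp: lang_def)
  moreover have "length w = m" by (simp add: w_def init_word_def)
  ultimately have "wmeas \<mu> w \<le> \<gamma> ^ m"
    using le_power[of w] by (simp add: m_def)
  then have "0 \<le> \<gamma> ^ m"
    using wmeas_nonneg[of \<mu> w] by linarith
  moreover have "odd m" by (simp add: m_def)
  ultimately show ?thesis by (simp add: zero_le_power_eq)
qed

text \<open>Where \<open>k n = 0\<close> the quotient \<open>real n / real (k n)\<close> is \<open>0\<close>, so that case cannot be excluded.\<close>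

lemma eventually_three_mul_le:
  assumes "(\<lambda>n. real n / real (k n)) \<longlonglongrightarrow> 0"
  shows "\<forall>\<^sub>F n in sequentially. 3 * n \<le> k n \<or> k n = 0"
proof -
  have "\<forall>\<^sub>F n in sequentially. real n / real (k n) < 1 / 3"
    by (rule order_tendstoD(2)[OF assms]) simp
  then show ?thesis
    by eventually_elim (auto simp: field_simps)
qed

lemma eventually_le_square:
  assumes "(\<lambda>n. real (k n)) \<in> o(\<lambda>n. real n ^ 2 / ln (real n))"
  shows "\<forall>\<^sub>F n in sequentially. k n \<le> n ^ 2"
proof -
  have "(\<lambda>n. real n ^ 2 / ln (real n)) \<in> O(\<lambda>n. real n ^ 2)" by real_asymp
  with assms have "(\<lambda>n. real (k n)) \<in> o(\<lambda>n. real n ^ 2)"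
    by (rule landau_o.small_big_trans)
  then have "\<forall>\<^sub>F n in sequentially. norm (real (k n)) \<le> 1 * norm (real n ^ 2)"
    by (rule landau_o.smallD) simp
  then show ?thesis
    by (elim eventually_mono) (simp del: of_nat_power add: of_nat_power[symmetric])
qed

theorem mainTheorem9:
  fixes X :: "(int \<Rightarrow> 'a::finite) set"
    and f :: "(int \<Rightarrow> 'a) \<Rightarrow> real"
    and \<mu> :: "(int \<Rightarrow> 'a) measure"
    and K \<alpha> \<gamma> \<delta> :: real and n0 :: nat and k :: "nat \<Rightarrow> nat"
  assumes SFT: "is_SFT X" and mixing: "top_mixing X" and nontrivial: "infinite X"
    and holder: "holder_on X f"
    and equil: "equilibrium_state X f \<mu>"
    and K_gt: "K > 1"
    and gibbs: "\<And>m x. m \<ge> 1 \<Longrightarrow> x \<in> X \<Longrightarrow>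
        inverse K \<le> wmeas \<mu> (init_word x m) / exp (- pressure X f * real m + birkhoff f m x)
      \<and> wmeas \<mu> (init_word x m) / exp (- pressure X f * real m + birkhoff f m x) \<le> K"
    and quasi_bern: "\<And>u v. u @ v \<in> lang X \<Longrightarrow>
        wmeas \<mu> (u @ v) \<le> K * wmeas \<mu> u * wmeas \<mu> v
      \<and> measure \<mu> ((shift ^^ length u) -` cyl v \<inter> cyl u) / measure \<mu> (cyl u) \<le> K * wmeas \<mu> v"
    and alpha: "gamma0 X \<mu> < \<alpha>" "\<alpha> \<le> 1"
    and gamma: "gamma0 X \<mu> < \<gamma>" "\<gamma> < \<alpha>"
    and n0: "\<And>u. u \<in> lang X \<Longrightarrow> length u \<ge> n0 \<Longrightarrow> wmeas \<mu> u \<le> \<gamma> ^ length u"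
    and delta: "0 < \<delta>" "\<delta> < ln (\<alpha> / \<gamma>) / 4"
    and k1: "(\<lambda>n. real n / real (k n)) \<longlonglongrightarrow> 0"
    and k2: "(\<lambda>n. real (k n)) \<in> o(\<lambda>n. real n ^ 2 / ln (real n))"
  shows "\<exists>p3 :: real poly. \<forall>\<^sub>F n in sequentially.
     (\<Sum>(u, v)\<in>Q_set X \<mu> \<delta> n (k n). wmeas \<mu> u * wmeas \<mu> v)
       \<le> poly p3 (real n) * exp (- 2 * real n * (ms_entropy X \<mu> - \<delta>)) * \<gamma> ^ n"
proof -
  have "invariant_on X \<mu>" using equil by (simp add: equilibrium_state_def)
  interpret quasi_bernoulli X \<mu> K
  proof (rule quasi_bernoulli.intro)
    show "prob_space \<mu>" "sets \<mu> = sets shift_space"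
      using \<open>invariant_on X \<mu>\<close> by (simp_all add: invariant_on_def)
    show "wmeas \<mu> (u @ v) \<le> K * wmeas \<mu> u * wmeas \<mu> v" if "u @ v \<in> lang X" for u v
      using quasi_bern[OF that] by blast
  qed (use SFT K_gt in auto)
  have "X \<noteq> {}" using nontrivial by auto
  then have "0 \<le> \<gamma>" using nonneg_of_wmeas_le_power n0 by blast
  define p3 where "p3 = smult (K ^ 4) ([:1, 0, 1:] ^ 2)"
  have "poly p3 x = K ^ 4 * (x ^ 2 + 1) ^ 2" for x
    by (simp add: p3_def power2_eq_square algebra_simps)
  moreover have "\<forall>\<^sub>F n in sequentially.
     (\<Sum>(u, v)\<in>Q_set X \<mu> \<delta> n (k n). wmeas \<mu> u * wmeas \<mu> v)
       \<le> K ^ 4 * (real n ^ 2 + 1) ^ 2 * exp (- 2 * real n * (ms_entropy X \<mu> - \<delta>)) * \<gamma> ^ n"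
    using eventually_ge_at_top[of "max n0 1"] eventually_three_mul_le[OF k1] eventually_le_square[OF k2]
  proof eventually_elim
    case (elim n)
    have window_le: "wmeas \<mu> s \<le> \<gamma> ^ n" if "s \<in> lang X" "length s = n" for s
      using n0[OF that(1)] that(2) elim(1) by simp
    show ?case
      by (rule sum_Q_set_le_square[OF _ _ _ _ window_le]) (use elim \<open>0 \<le> \<gamma>\<close> in auto)
  qed
  ultimately show ?thesis by (intro exI[of _ p3]) simp
qed

end
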